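(* Let $\omega\in\mathbb{R}^d$, let $I_\omega=\{(k,l)\in\mathbb{Z}^d\times\mathbb{Z}:\langle k,\omega\rangle+l=0\}$, let $c$ be the rank of the lattice $I_\omega$, and let $(p_1,q_1),\dots,(p_c,q_c)\in I_\omega$ be linearly independent. Then $$\mathbb{X}_{p,q}\cap\mathcal{B}_\omega=\overline{\mathcal{B}}_\omega,$$ i.e. every Birkhoff configuration $x$ of rotation vector $\omega$ with $\tau_{p_j,q_j}x=x$ for $j=1,\dots,c$ satisfies $\tau_{k,l}x=x$ for all $(k,l)\in I_\omega$.
   Context: For $(k,l)\in\mathbb{Z}^d\times\mathbb{Z}$ the shift operator $\tau_{k,l}:\mathbb{R}^{\mathbb{Z}^d}\to\mathbb{R}^{\mathbb{Z}^d}$ is $(\tau_{k,l}x)_i=x_{i+k}+l$. On $\mathbb{R}^{\mathbb{Z}^d}$: $x\le y$ iff $x_i\le y_i$ for all $i$. A configuration $x$ is Birkhoff if for every $(k,l)$ either $\tau_{k,l}x\ge x$ or $\tau_{k,l}x\le x$. A vector $\omega\in\mathbb{R}^d$ is the rotation vector of $x$ if for every $i\in\mathbb{Z}^d$, $\lim_{n\to\infty}x_{ni}/n=\langle\omega,i\rangle$. $\mathcal{B}_\omega$ denotes the set of Birkhoff configurations with rotation vector $\omega$, and $\overline{\mathcal{B}}_\omega=\{x\in\mathcal{B}_\omega:\tau_{k,l}x=x\text{ whenever }\langle\omega,k\rangle+l=0\}$. $\mathbb{X}_{p,q}=\{x\in\mathbb{R}^{\mathbb{Z}^d}:\tau_{p_j,q_j}x=x\text{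 for all }j=1,\dots,c\}$. *)

theory Defs
  imports "HOL-Analysis.Analysis"
begin

text \<open>Configurations are maps from the lattice Z^d (modelled as int ^ 'd, 'd a finite
index type of cardinality d) to the reals; they are ordered pointwise.\<close>

type_synonym 'd config = "int ^ 'd \<Rightarrow> real"

definition shift :: "int ^ 'd \<Rightarrow> int \<Rightarrow> 'd config \<Rightarrow> 'd config" where
  "shift k l x = (\<lambda>i. x (i + k) + of_int l)"

definition pair_ip :: "real ^ 'd \<Rightarrow> int ^ 'd \<Rightarrow> real" where
  "pair_ip \<omega> k = (\<Sum>i\<in>UNIV. \<omega> $ i * of_int (k $ i))"

definition birkhoff :: "('d::finite) config \<Rightarrow> bool" where
  "birkhoff x \<longleftrightarrow> (\<forall>k l. shift k l x \<ge> x \<or> shift k l x \<le> x)"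

definition has_rotation_vector :: "('d::finite) config \<Rightarrow> real ^ 'd \<Rightarrow> bool" where
  "has_rotation_vector x \<omega> \<longleftrightarrow>
     (\<forall>i. (\<lambda>n::nat. x (of_nat n *s i) / real n) \<longlonglongrightarrow> pair_ip \<omega> i)"

definition Birk :: "real ^ ('d::finite) \<Rightarrow> 'd config set" where
  "Birk \<omega> = {x. birkhoff x \<and> has_rotation_vector x \<omega>}"

definition resonances :: "real ^ ('d::finite) \<Rightarrow> ((int ^ 'd) \<times> int) set" where
  "resonances \<omega> = {(k, l). pair_ip \<omega> k + of_int l = 0}"

definition Birk_bar :: "real ^ ('d::finite) \<Rightarrow> 'd config set" where
  "Birk_bar \<omega> = {x \<in> Birk \<omega>. \<forall>(k, l) \<in> resonances \<omega>. shift k l x = x}"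

definition Xpq :: "nat \<Rightarrow> (nat \<Rightarrow> int ^ ('d::finite)) \<Rightarrow> (nat \<Rightarrow> int) \<Rightarrow> 'd config set" where
  "Xpq c p q = {x. \<forall>j<c. shift (p j) (q j) x = x}"

text \<open>Embedding of Z^d x Z into the real vector space R^(d+1) (index type 'd option).\<close>
definition emb :: "(int ^ ('d::finite)) \<times> int \<Rightarrow> real ^ ('d option)" where
  "emb kl = (\<chi> i. case i of None \<Rightarrow> of_int (snd kl) | Some j \<Rightarrow> of_int (fst kl $ j))"

text \<open>Rank of a subgroup of Z^(d+1): dimension of its real span.\<close>
definition lattice_rank :: "((int ^ ('d::finite)) \<times> int) set \<Rightarrow> nat" where
  "lattice_rank S = dim (emb ` S)"

text \<open>Linear independence of the family v_0,...,v_(c-1) in Z^(d+1) (over R, equivalently Q).\<close>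
definition lin_indep_family :: "nat \<Rightarrow> (nat \<Rightarrow> (int ^ ('d::finite)) \<times> int) \<Rightarrow> bool" where
  "lin_indep_family c v \<longleftrightarrow> inj_on (emb \<circ> v) {..<c} \<and> independent ((emb \<circ> v) ` {..<c})"

end

theory Submission
  imports Defs
begin

(* Let x be a Birkhoff configuration of rotation vector omega that is fixed by
   the c shifts tau_(p_j,q_j), and let (k,l) be any resonance.
   (1) The period set {(k,l). tau_(k,l) x = x} is a subgroup of Z^d x Z, so x is fixed by
       every integer combination of the (p_j,q_j).
   (2) Embedded in R^(d+1), the (p_j,q_j) are c = rank independent vectors of the resonance
       lattice, hence span it; by Dirichlet's simultaneous approximation theorem a positive
       multiple Q (k,l) of any integer vector in their real span is an integer combination
       of them (an integer vector of norm < 1 vanishes).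
   (3) tau_(k,l) is monotone and, x being Birkhoff, tau_(k,l) x is comparable with x; a
       monotone map with a comparable periodic point fixes that point.  Since
       tau_(k,l)^Q x = tau_(Qk,Ql) x = x by (1) and (2), we get tau_(k,l) x = x. *)

lemma shift_comp: "shift k l (shift k' l' x) = shift (k + k') (l + l') x"
  by (auto simp: shift_def algebra_simps)

lemma shift_zero: "shift 0 0 x = x"
  by (simp add: shift_def)

lemma shift_mono: "mono (shift k l)"
  by (auto simp: mono_def shift_def le_fun_def)

lemma shift_iter: "(shift k l ^^ n) x = shift (int n *s k) (int n * l) x"
  by (induction n) (simp_all add: shift_zero shift_comp algebra_simps vector_sadd_rdistrib)

lemma shift_fixed_int_mult:
  assumes "shift k l x = x"
  shows "shift (m *s k) (m * l) x = x"
proof -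
  have "(shift k l ^^ n) x = x" for n
    by (induction n) (simp_all add: assms)
  then have nat_mult: "shift (int n *s k) (int n * l) x = x" for n
    by (simp add: shift_iter)
  show ?thesis
  proof (cases "m \<ge> 0")
    case True
    then show ?thesis using nat_mult[of "nat m"] by simp
  next
    case False
    have "shift (m *s k) (m * l) x = shift (m *s k) (m * l) (shift (- m *s k) (- m * l) x)"
      using nat_mult[of "nat (- m)"] False by simp
    also have "\<dots> = x"
      by (simp add: shift_comp shift_zero vector_sadd_rdistrib[symmetric])
    finally show ?thesis .
  qed
qed

lemma shift_fixed_int_combination:
  assumes "\<forall>j<(c::nat). shift (p j) (q j) x = x"
  shows "shift (\<Sum>j<c. P j *s p j) (\<Sum>j<c. P j * q j) x = x"
  using assms
proof (induction c)
  case 0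
  then show ?case by (simp add: shift_zero)
next
  case (Suc c)
  have "shift (P c *s p c) (P c * q c) x = x"
    using Suc.prems shift_fixed_int_mult by blast
  then show ?case
    using Suc by (simp add: shift_comp[symmetric] add.commute)
qed

text \<open>If a monotone map moves a point in a comparable direction, its iterates keep moving it
  that way; so a periodic point comparable with its image is a fixed point.\<close>

lemma mono_comparable_periodic_point_fixed:
  fixes f :: "'a::order \<Rightarrow> 'a"
  assumes mono: "mono f" and cmp: "f x \<ge> x \<or> f x \<le> x"
    and periodic: "(f ^^ n) x = x" and "n > 0"
  shows "f x = x"
proof -
  have x_eq: "(f ^^ Suc (n - 1)) x = x" using periodic \<open>n > 0\<close> by simp
  from cmp show ?thesis
  proof
    assume up: "f x \<ge> x"
    have "(f ^^ Suc m) x \<ge> f x" for m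
      by (induction m) (auto intro: order_trans[OF up] monoD[OF mono])
    from this[of "n - 1"] x_eq up show ?thesis by simp
  next
    assume down: "f x \<le> x"
    have "(f ^^ Suc m) x \<le> f x" for m
      by (induction m) (auto intro: order_trans[OF _ down] monoD[OF mono])
    from this[of "n - 1"] x_eq down show ?thesis by simp
  qed
qed

lemma span_image_lincomb:
  fixes e :: "nat \<Rightarrow> 'a::real_vector"
  assumes "v \<in> span (e ` {..<c})"
  shows "\<exists>r. v = (\<Sum>j<c. r j *\<^sub>R e j)"
  using assms
proof (induction rule: span_induct_alt)
  case base
  show ?case by (intro exI[of _ "\<lambda>_. 0"]) simp
next
  case (step a y z)
  then obtain i r where i: "i < c" "y = e i" and z: "z = (\<Sum>j<c. r j *\<^sub>R e j)" by blast
  have "(\<Sum>j<c. (if j = i then a else 0) *\<^sub>R e j) = (\<Sum>j<c. if j = i then a *\<^sub>R e i else 0)"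
    by (rule sum.cong) auto
  also have "\<dots> = a *\<^sub>R y" using i by simp
  finally have "a *\<^sub>R y + z = (\<Sum>j<c. (r j + (if j = i then a else 0)) *\<^sub>R e j)"
    by (simp add: z scaleR_add_left sum.distrib add.commute)
  then show ?case by (intro exI[of _ "\<lambda>j. r j + (if j = i then a else 0)"])
qed

lemma integer_vector_small_norm:
  fixes w :: "real ^ 'n"
  assumes "\<forall>t. w $ t \<in> \<int>" and "norm w < 1"
  shows "w = 0"
proof -
  have "w $ t = 0" for t
  proof -
    from assms(1) obtain z :: int where "w $ t = of_int z" by (auto elim: Ints_cases)
    moreover have "\<bar>w $ t\<bar> < 1" using component_le_norm_cart[of w t] assms(2) by linarith
    ultimately show ?thesis by simp
  qed
  then show ?thesis by (simp add: vec_eq_iff)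
qed

text \<open>If an integer vector lies in the real span of integer vectors, a positive integer
  multiple of it is an integer combination of them (Dirichlet approximation of the real
  coefficients by rationals with a common denominator).\<close>

lemma integer_span_multiple:
  fixes v :: "real ^ 'n" and e :: "nat \<Rightarrow> real ^ 'n"
  assumes span: "v \<in> span (e ` {..<c})"
    and v_int: "\<forall>t. v $ t \<in> \<int>" and e_int: "\<forall>j t. e j $ t \<in> \<int>"
  obtains Q :: int and P where "Q > 0" "of_int Q *\<^sub>R v = (\<Sum>j<c. of_int (P j) *\<^sub>R e j)"
proof -
  obtain r where v: "v = (\<Sum>j<c. r j *\<^sub>R e j)" using span_image_lincomb[OF span] by blast
  define S where "S = (\<Sum>j<c. norm (e j))"
  obtain N :: nat where N: "S < real N" "N > 0"
  proof -
    obtain n :: nat where "S < real n" using reals_Archimedean2 by blast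
    then show ?thesis using that[of "Suc n"] by simp
  qed
  obtain Q :: int and P where Q: "Q > 0"
    and P: "\<And>j. j < c \<Longrightarrow> \<bar>of_int Q * r j - of_int (P j)\<bar> < 1 / N"
    using Dirichlet_approx_simult[OF N(2), where \<theta> = r and n = c] by metis
  define w where "w = (\<Sum>j<c. (of_int Q * r j - of_int (P j)) *\<^sub>R e j)"
  have "norm w \<le> (\<Sum>j<c. \<bar>of_int Q * r j - of_int (P j)\<bar> * norm (e j))"
    unfolding w_def by (rule order_trans[OF norm_sum]) simp
  also have "\<dots> \<le> (\<Sum>j<c. (1 / N) * norm (e j))"
    using P by (intro sum_mono mult_right_mono) (auto intro: less_imp_le)
  also have "\<dots> = S / N" by (simp add: S_def sum_divide_distrib)
  also have "\<dots> < 1" using N by simp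
  finally have "norm w < 1" .
  moreover have w_eq: "w = of_int Q *\<^sub>R v - (\<Sum>j<c. of_int (P j) *\<^sub>R e j)"
    unfolding w_def v by (simp add: scaleR_sum_right scaleR_left_diff_distrib sum_subtractf)
  moreover have "\<forall>t. w $ t \<in> \<int>"
    using v_int e_int by (auto simp: w_eq intro!: Ints_diff Ints_mult Ints_sum)
  ultimately have "w = 0" using integer_vector_small_norm by blast
  with w_eq Q that show ?thesis by simp
qed

lemma emb_integer: "emb kl $ t \<in> \<int>"
  by (cases t) (simp_all add: emb_def)

lemma emb_inj: "inj emb"
proof (rule injI)
  fix a b :: "(int ^ 'd) \<times> int" assume eq: "emb a = emb b"
  have "fst a $ i = fst b $ i" for i using arg_cong[OF eq, of "\<lambda>v. v $ Some i"] by (simp add: emb_def)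
  moreover have "snd a = snd b" using arg_cong[OF eq, of "\<lambda>v. v $ None"] by (simp add: emb_def)
  ultimately show "a = b" by (simp add: prod_eq_iff vec_eq_iff)
qed

lemma emb_int_combination:
  "emb (\<Sum>j<c. P j *s p j, \<Sum>j<c. P j * q j) = (\<Sum>j<c. of_int (P j) *\<^sub>R emb (p j, q j))"
  by (simp add: vec_eq_iff emb_def split: option.split)

lemma emb_int_mult: "emb (Q *s k, Q * l) = of_int Q *\<^sub>R emb (k, l)"
  by (simp add: vec_eq_iff emb_def split: option.split)

text \<open>c = rank independent resonances span the resonance lattice over R, so every resonance
  has a positive multiple that is an integer combination of them.\<close>

lemma resonance_multiple_combination:
  fixes \<omega> :: "real ^ 'd::finite" and p :: "nat \<Rightarrow> int ^ 'd" and q :: "nat \<Rightarrow> int"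
  assumes c: "c = lattice_rank (resonances \<omega>)"
    and res: "\<forall>j<c. (p j, q j) \<in> resonances \<omega>"
    and indep: "lin_indep_family c (\<lambda>j. (p j, q j))"
    and kl: "(k, l) \<in> resonances \<omega>"
  obtains Q :: int and P where "Q > 0"
    "Q *s k = (\<Sum>j<c. P j *s p j)" "Q * l = (\<Sum>j<c. P j * q j)"
proof -
  define e where "e = (\<lambda>j. emb (p j, q j))"
  have inj: "inj_on e {..<c}" and ind: "independent (e ` {..<c})"
    using indep by (auto simp: lin_indep_family_def e_def o_def)
  have "emb ` resonances \<omega> \<subseteq> span (e ` {..<c})"
    using res inj
    by (intro card_ge_dim_independent[OF _ ind]) (auto simp: e_def c lattice_rank_def card_image)
  then have "emb (k, l) \<in> span (e ` {..<c})" using kl by auto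
  then obtain Q :: int and P where Q: "Q > 0"
    and comb: "of_int Q *\<^sub>R emb (k, l) = (\<Sum>j<c. of_int (P j) *\<^sub>R e j)"
    by (rule integer_span_multiple) (simp_all add: emb_integer e_def)
  have "(Q *s k, Q * l) = (\<Sum>j<c. P j *s p j, \<Sum>j<c. P j * q j)"
    using comb by (intro injD[OF emb_inj]) (simp add: emb_int_mult emb_int_combination e_def)
  with Q that show ?thesis by simp
qed

theorem mainTheorem2:
  fixes \<omega> :: "real ^ 'd::finite"
    and c :: nat
    and p :: "nat \<Rightarrow> int ^ 'd"
    and q :: "nat \<Rightarrow> int"
  assumes "c = lattice_rank (resonances \<omega>)"
    and "\<forall>j<c. (p j, q j) \<in> resonances \<omega>"
    and "lin_indep_family c (\<lambda>j. (p j, q j))"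
  shows "Xpq c p q \<inter> Birk \<omega> = Birk_bar \<omega>"
proof
  show "Birk_bar \<omega> \<subseteq> Xpq c p q \<inter> Birk \<omega>"
    using assms(2) by (auto simp: Birk_bar_def Xpq_def)
next
  show "Xpq c p q \<inter> Birk \<omega> \<subseteq> Birk_bar \<omega>"
  proof
    fix x assume x: "x \<in> Xpq c p q \<inter> Birk \<omega>"
    have "shift k l x = x" if kl: "(k, l) \<in> resonances \<omega>" for k l
    proof -
      obtain Q :: int and P where Q: "Q > 0"
        "Q *s k = (\<Sum>j<c. P j *s p j)" "Q * l = (\<Sum>j<c. P j * q j)"
        using resonance_multiple_combination[OF assms kl] by metis
      have "(shift k l ^^ nat Q) x = x"
        using shift_fixed_int_combination[of c p q x P] x Q by (simp add: shift_iter Xpq_def)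
      moreover have "shift k l x \<ge> x \<or> shift k l x \<le> x"
        using x by (auto simp: Birk_def birkhoff_def)
      ultimately show ?thesis
        using mono_comparable_periodic_point_fixed[OF shift_mono] Q(1) zero_less_nat_eq by blast
    qed
    then show "x \<in> Birk_bar \<omega>" using x by (auto simp: Birk_bar_def)
  qed
qed

end
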